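(* Let $X$ be a vector lattice and let $l : X \to \mathbb{R}$ be an order bounded linear functional. Then $\ker(l)$ is a Grothendieck subspace of $X$ if and only if the modulus $|l|$ of $l$ is the sum of some pair of Riesz homomorphisms $X \to \mathbb{R}$.
   Context: The modulus of an order bounded functional $l$ is $|l| = l \vee (-l)$ in the Riesz space of order bounded functionals. A Riesz homomorphism is a linear functional preserving finite lattice operations. A linear subspace $H$ of a vector lattice is called a Grothendieck subspace (or $G$-space) if for all $x, y \in H$ one has $x \vee y \vee 0 + x \wedge y \wedge 0 \in H$. *)

theory Defs
  imports Main "HOL-Analysis.Analysis"
begin

class vector_lattice = ordered_real_vector + lattice

definition order_bounded_functional :: "('a::vector_lattice \<Rightarrow> real) \<Rightarrow> bool" where
  "order_bounded_functional l \<longleftrightarrow> linear l \<and>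
     (\<forall>x y. \<exists>M. \<forall>z. x \<le> z \<and> z \<le> y \<longrightarrow> \<bar>l z\<bar> \<le> M)"

definition functional_le :: "('a::vector_lattice \<Rightarrow> real) \<Rightarrow> ('a \<Rightarrow> real) \<Rightarrow> bool" where
  "functional_le f g \<longleftrightarrow> (\<forall>x. 0 \<le> x \<longrightarrow> f x \<le> g x)"

definition is_modulus :: "('a::vector_lattice \<Rightarrow> real) \<Rightarrow> ('a \<Rightarrow> real) \<Rightarrow> bool" where
  "is_modulus l m \<longleftrightarrow> order_bounded_functional m \<and>
     functional_le l m \<and> functional_le (\<lambda>x. - l x) m \<and>
     (\<forall>g. order_bounded_functional g \<and> functional_le l g \<and> functional_le (\<lambda>x. - l x) g
          \<longrightarrow> functional_le m g)"

definition modulus :: "('a::vector_lattice \<Rightarrow> real) \<Rightarrow> ('a \<Rightarrow> real)" where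
  "modulus l = (THE m. is_modulus l m)"

definition riesz_hom :: "('a::vector_lattice \<Rightarrow> real) \<Rightarrow> bool" where
  "riesz_hom f \<longleftrightarrow> linear f \<and> (\<forall>x y. f (sup x y) = max (f x) (f y) \<and> f (inf x y) = min (f x) (f y))"

definition grothendieck_subspace :: "('a::vector_lattice) set \<Rightarrow> bool" where
  "grothendieck_subspace H \<longleftrightarrow> subspace H \<and>
     (\<forall>x\<in>H. \<forall>y\<in>H. sup (sup x y) 0 + inf (inf x y) 0 \<in> H)"

end

theory Submission
  imports Defs "HOL-Library.Lattice_Algebras"
begin

(*
  If ker l is a Grothendieck subspace, then of any three pairwise disjoint positive
  elements x, y, z one is killed by l: otherwise rescale so that l x = l y = s; for a
  suitable c the elements x + c z and y + c z lie in the kernel, but their Grothendieck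
  combination is x + y + c z, on which l takes the value s. By the Riesz-Kantorovich
  formula |l| x = 2 sup {l u | 0 <= u <= x} - l x the same holds for |l|. A positive
  functional phi with this property is a Riesz homomorphism unless it is nonzero on two
  disjoint elements a, b; then phi = phi_a + (phi - phi_a), where phi_a x is the eventually
  constant value of phi (inf x (t a)) for large t, and both summands kill one of any two
  disjoint elements, which makes them Riesz homomorphisms.

  Conversely, if |l| = f + g, then |l z| <= |f z| + |g z| shows that l vanishes on
  ker f inter ker g, so l = alpha f + beta g. A Riesz homomorphism maps the Grothendieck
  combination of x and y to T (f x) (f y) with T u v = max (max u v) 0 + min (min u v) 0,
  and T is homogeneous under all real scalars, so l vanishes on the combination of any two
  elements of its kernel.
*)

section \<open>Disjointness in lattice-ordered groups\<close>

subclass (in vector_lattice) lattice_ab_group_add ..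

lemma inf_eq_0_imp_nonneg:
  fixes x y :: "'a::{semilattice_inf,zero}"
  assumes "inf x y = 0"
  shows "0 \<le> x" "0 \<le> y"
  using inf_le1[of x y] inf_le2[of x y] assms by simp_all

lemma pprt_diff_pprt_neg: "pprt x - pprt (- x) = (x::'a::lattice_ab_group_add)"
  by (metis prts pprt_neg diff_minus_eq_add)

lemma inf_pprt_pprt_neg: "inf (pprt x) (pprt (- x)) = (0::'a::lattice_ab_group_add)"
proof -
  have "inf (pprt x) (pprt (- x)) = inf (pprt (- x) + x) (pprt (- x) + 0)"
    using pprt_diff_pprt_neg[of x] by (simp add: algebra_simps)
  also have "\<dots> = pprt (- x) + nprt x"
    by (simp only: add_inf_distrib_left[symmetric] nprt_def)
  finally show ?thesis by (simp add: pprt_neg)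
qed

lemma inf_pprt_pprt_eq_0_if_add_le_0:
  fixes x y :: "'a::lattice_ab_group_add"
  assumes "x + y \<le> 0"
  shows "inf (pprt x) (pprt y) = 0"
proof (rule antisym)
  have "pprt x \<le> pprt (- y)" using assms by (simp add: le_eq_neg)
  hence "inf (pprt x) (pprt y) \<le> inf (pprt (- y)) (pprt y)" by (rule inf_mono) simp
  thus "inf (pprt x) (pprt y) \<le> 0" using inf_pprt_pprt_neg[of y] by (simp add: inf_commute)
qed simp

lemma sup_eq_add_if_inf_eq_0: "inf x y = 0 \<Longrightarrow> sup x y = x + (y::'a::lattice_ab_group_add)"
  using add_eq_inf_sup[of x y] by simp

lemma pprt_diff_eq_if_inf_eq_0:
  fixes x y :: "'a::lattice_ab_group_add"
  assumes "inf x y = 0"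
  shows "pprt (x - y) = x"
proof -
  have "pprt (x - y) = sup x y - y"
    using add_sup_distrib_right[of x y "- y"] by (simp add: pprt_def)
  thus ?thesis using sup_eq_add_if_inf_eq_0[OF assms] by simp
qed

lemma diff_inf_eq_pprt_diff: "x - inf x y = pprt (x - (y::'a::lattice_ab_group_add))"
  by (simp add: pprt_def diff_inf_eq_sup add_sup_distrib_left sup_commute)

lemma inf_eq_0_mono:
  fixes x y u v :: "'a::lattice_ab_group_add"
  assumes "inf x y = 0" "0 \<le> u" "u \<le> x" "0 \<le> v" "v \<le> y"
  shows "inf u v = 0"
proof (rule antisym)
  show "inf u v \<le> 0" using inf_mono[OF assms(3,5)] assms(1) by simp
qed (use assms in simp)

lemma riesz_decomposition:
  fixes w x y :: "'a::lattice_ab_group_add"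
  assumes "0 \<le> w" "w \<le> x + y" "0 \<le> x" "0 \<le> y"
  obtains u v where "0 \<le> u" "u \<le> x" "0 \<le> v" "v \<le> y" "w = u + v"
proof
  show "0 \<le> inf w x" "inf w x \<le> x" using assms by simp_all
  show "0 \<le> w - inf w x" by (simp only: diff_ge_0_iff_ge inf_le1)
  have "w - x \<le> y" using assms(2) by (simp add: algebra_simps)
  thus "w - inf w x \<le> y"
    unfolding diff_inf_eq_pprt_diff pprt_def using assms(4) by (rule sup_least)
  show "w = inf w x + (w - inf w x)" by (simp only: add.commute[of "inf w x"] diff_add_cancel)
qed

lemma inf_add_le:
  fixes x y z :: "'a::lattice_ab_group_add"
  assumes "0 \<le> x" "0 \<le> y" "0 \<le> z"
  shows "inf (x + y) z \<le> inf x z + inf y z"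
proof -
  obtain u v where u: "0 \<le> u" "u \<le> x" and v: "0 \<le> v" "v \<le> y" and w: "inf (x + y) z = u + v"
    by (rule riesz_decomposition[of "inf (x + y) z" x y]) (use assms in auto)
  have "u + v \<le> z" using w inf_le2[of "x + y" z] by simp
  moreover have "u \<le> u + v" "v \<le> u + v" using u v by simp_all
  ultimately have "u \<le> z" "v \<le> z" by (meson order_trans)+
  thus ?thesis using u v w by (simp add: add_mono le_infI)
qed

lemma inf_add_eq_0:
  fixes x y z :: "'a::lattice_ab_group_add"
  assumes "inf x z = 0" "inf y z = 0"
  shows "inf (x + y) z = 0"
  using inf_add_le[of x y z] assms inf_eq_0_imp_nonneg[OF assms(1)] inf_eq_0_imp_nonneg[OF assms(2)]
  by (simp add: antisym)

lemma scaleR_inf_distrib: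
  fixes x y :: "'a::vector_lattice"
  assumes "0 \<le> c"
  shows "c *\<^sub>R inf x y = inf (c *\<^sub>R x) (c *\<^sub>R y)"
proof (cases "c = 0")
  case False
  with assms have c: "0 < c" by simp
  have "inf (c *\<^sub>R x) (c *\<^sub>R y) = c *\<^sub>R ((1 / c) *\<^sub>R inf (c *\<^sub>R x) (c *\<^sub>R y))"
    using c by simp
  also have "\<dots> \<le> c *\<^sub>R inf x y"
  proof (intro scaleR_left_mono le_infI)
    show "(1 / c) *\<^sub>R inf (c *\<^sub>R x) (c *\<^sub>R y) \<le> x"
      using scaleR_left_mono[OF inf_le1, of "1 / c" "c *\<^sub>R x" "c *\<^sub>R y"] c by simp
    show "(1 / c) *\<^sub>R inf (c *\<^sub>R x) (c *\<^sub>R y) \<le> y"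
      using scaleR_left_mono[OF inf_le2, of "1 / c" "c *\<^sub>R x" "c *\<^sub>R y"] c by simp
  qed (use c in simp)
  finally show ?thesis using assms by (simp add: antisym scaleR_left_mono)
qed simp

lemma inf_scaleR_eq_0:
  fixes x y :: "'a::vector_lattice"
  assumes "inf x y = 0" "0 \<le> c" "0 \<le> d"
  shows "inf (c *\<^sub>R x) (d *\<^sub>R y) = 0"
proof (rule antisym)
  have x: "0 \<le> x" and y: "0 \<le> y" using inf_eq_0_imp_nonneg[OF assms(1)] .
  have "inf (c *\<^sub>R x) (d *\<^sub>R y) \<le> inf (max c d *\<^sub>R x) (max c d *\<^sub>R y)"
    using x y by (intro inf_mono scaleR_right_mono) auto
  also have "\<dots> = 0"
    using scaleR_inf_distrib[of "max c d" x y] assms by simp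
  finally show "inf (c *\<^sub>R x) (d *\<^sub>R y) \<le> 0" .
  show "0 \<le> inf (c *\<^sub>R x) (d *\<^sub>R y)" using x y assms(2,3) by (simp add: scaleR_nonneg_nonneg)
qed

section \<open>Positive functionals and Riesz homomorphisms\<close>

lemmas linear_functional_simps = linear_add linear_diff linear_neg linear_0 linear_scale

definition positive_functional :: "('a::ordered_real_vector \<Rightarrow> real) \<Rightarrow> bool" where
  "positive_functional \<phi> \<longleftrightarrow> (\<forall>x. 0 \<le> x \<longrightarrow> 0 \<le> \<phi> x)"

lemma positive_functional_mono:
  assumes "linear \<phi>" "positive_functional \<phi>" "x \<le> y"
  shows "\<phi> x \<le> \<phi> y"
proof -
  have "0 \<le> \<phi> (y - x)" using assms(2,3) unfolding positive_functional_def by simp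
  thus ?thesis using assms(1) by (simp add: linear_diff)
qed

lemma order_bounded_if_positive:
  fixes \<phi> :: "'a::vector_lattice \<Rightarrow> real"
  assumes "linear \<phi>" "positive_functional \<phi>"
  shows "order_bounded_functional \<phi>"
  unfolding order_bounded_functional_def
proof (intro conjI assms allI)
  fix x y :: 'a
  have "\<bar>\<phi> z\<bar> \<le> \<bar>\<phi> x\<bar> + \<bar>\<phi> y\<bar>" if "x \<le> z" "z \<le> y" for z
    using positive_functional_mono[OF assms that(1)] positive_functional_mono[OF assms that(2)]
    by linarith
  thus "\<exists>M. \<forall>z. x \<le> z \<and> z \<le> y \<longrightarrow> \<bar>\<phi> z\<bar> \<le> M" by blast
qed

lemma linear_eq_if_eq_on_nonneg:
  fixes f g :: "'a::vector_lattice \<Rightarrow> real"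
  assumes "linear f" "linear g" "\<And>x. 0 \<le> x \<Longrightarrow> f x = g x"
  shows "f = g"
proof
  fix x
  have "f (pprt x - pprt (- x)) = g (pprt x - pprt (- x))"
    using assms by (simp add: linear_diff)
  thus "f x = g x" by (simp only: pprt_diff_pprt_neg)
qed

lemma riesz_homI:
  fixes \<phi> :: "'a::vector_lattice \<Rightarrow> real"
  assumes lin: "linear \<phi>" and pos: "positive_functional \<phi>"
    and disj: "\<And>x y. inf x y = 0 \<Longrightarrow> \<phi> x = 0 \<or> \<phi> y = 0"
  shows "riesz_hom \<phi>"
proof -
  have pprt: "\<phi> (pprt z) = max (\<phi> z) 0" for z
  proof -
    have "\<phi> (pprt z) - \<phi> (pprt (- z)) = \<phi> z"
      using lin pprt_diff_pprt_neg[of z] by (metis linear_diff)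
    moreover have "0 \<le> \<phi> (pprt z)" "0 \<le> \<phi> (pprt (- z))"
      using pos unfolding positive_functional_def by simp_all
    ultimately show ?thesis using disj[OF inf_pprt_pprt_neg[of z]] by linarith
  qed
  have sup: "\<phi> (sup x y) = max (\<phi> x) (\<phi> y)" for x y
  proof -
    have "sup x y = pprt (x - y) + y"
      using add_sup_distrib_right[of "x - y" 0 y] by (simp add: pprt_def)
    thus ?thesis using pprt[of "x - y"] lin by (simp add: linear_functional_simps)
  qed
  have "\<phi> (inf x y) = min (\<phi> x) (\<phi> y)" for x y
  proof -
    have "inf x y = x + y - sup x y" using add_eq_inf_sup[of x y] by (metis add_diff_cancel_left')
    hence "\<phi> (inf x y) = \<phi> x + \<phi> y - \<phi> (sup x y)" using lin by (metis linear_add linear_diff)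
    thus ?thesis using sup[of x y] by simp
  qed
  thus ?thesis unfolding riesz_hom_def using lin sup by blast
qed

lemma riesz_hom_linear: "riesz_hom f \<Longrightarrow> linear f"
  unfolding riesz_hom_def by blast

lemma riesz_hom_pprt: "riesz_hom f \<Longrightarrow> f (pprt x) = max (f x) 0"
  unfolding riesz_hom_def pprt_def by (metis linear_0)

lemma riesz_hom_abs: "riesz_hom f \<Longrightarrow> f (pprt x + pprt (- x)) = \<bar>f x\<bar>"
  using riesz_hom_pprt[of f x] riesz_hom_pprt[of f "- x"] linear_add[OF riesz_hom_linear, of f]
    linear_neg[OF riesz_hom_linear, of f]
  by simp

lemma riesz_hom_zero: "riesz_hom (\<lambda>x::'a::vector_lattice. 0::real)"
  unfolding riesz_hom_def by (simp add: linear_zero)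

lemma riesz_hom_grothendieck_combination:
  assumes "riesz_hom f"
  shows "f (sup (sup x y) 0 + inf (inf x y) 0) = max (max (f x) (f y)) 0 + min (min (f x) (f y)) 0"
  using assms linear_0[OF riesz_hom_linear[OF assms]] linear_add[OF riesz_hom_linear[OF assms]]
  unfolding riesz_hom_def by simp

definition cone_extension :: "('a::lattice_ab_group_add \<Rightarrow> real) \<Rightarrow> 'a \<Rightarrow> real" where
  "cone_extension F x = F (pprt x) - F (pprt (- x))"

lemma cone_extension_eq_diff:
  fixes F :: "'a::lattice_ab_group_add \<Rightarrow> real"
  assumes add: "\<And>x y. 0 \<le> x \<Longrightarrow> 0 \<le> y \<Longrightarrow> F (x + y) = F x + F y"
    and "0 \<le> p" "0 \<le> q" "x = p - q"
  shows "cone_extension F x = F p - F q"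
proof -
  have "pprt x - pprt (- x) = p - q" using pprt_diff_pprt_neg assms(4) by metis
  hence "pprt x + q = p + pprt (- x)" by (simp add: algebra_simps)
  hence "F (pprt x) + F q = F p + F (pprt (- x))"
    using add assms(2,3) by (metis zero_le_pprt)
  thus ?thesis unfolding cone_extension_def by simp
qed

lemma
  fixes F :: "'a::vector_lattice \<Rightarrow> real"
  assumes add: "\<And>x y. 0 \<le> x \<Longrightarrow> 0 \<le> y \<Longrightarrow> F (x + y) = F x + F y"
    and scale: "\<And>c x. 0 \<le> c \<Longrightarrow> 0 \<le> x \<Longrightarrow> F (c *\<^sub>R x) = c * F x"
  shows linear_cone_extension: "linear (cone_extension F)"
    and cone_extension_nonneg: "0 \<le> x \<Longrightarrow> cone_extension F x = F x"
proof -
  have ext: "cone_extension F x = F p - F q" if "0 \<le> p" "0 \<le> q" "x = p - q" for x p q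
    using add that by (rule cone_extension_eq_diff)
  have "F 0 = 0" using add[of 0 0] by simp
  thus "0 \<le> x \<Longrightarrow> cone_extension F x = F x" using ext[of x 0 x] by simp
  show "linear (cone_extension F)"
  proof (rule linearI)
    fix x y :: 'a
    have "x + y = (pprt x + pprt y) - (pprt (- x) + pprt (- y))"
      using pprt_diff_pprt_neg[of x] pprt_diff_pprt_neg[of y] by (simp add: algebra_simps)
    thus "cone_extension F (x + y) = cone_extension F x + cone_extension F y"
      using ext add unfolding cone_extension_def by (simp add: add_nonneg_nonneg)
  next
    fix c :: real and x :: 'a
    have split: "c *\<^sub>R x = c *\<^sub>R pprt x - c *\<^sub>R pprt (- x)"
      by (simp only: pprt_diff_pprt_neg flip: scaleR_diff_right)
    show "cone_extension F (c *\<^sub>R x) = c *\<^sub>R cone_extension F x"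
    proof (cases "0 \<le> c")
      case True
      have "cone_extension F (c *\<^sub>R x) = F (c *\<^sub>R pprt x) - F (c *\<^sub>R pprt (- x))"
        by (rule ext[OF _ _ split]) (simp_all add: True scaleR_nonneg_nonneg)
      thus ?thesis using True scale unfolding cone_extension_def by (simp add: algebra_simps)
    next
      case False
      have "c *\<^sub>R x = (- c) *\<^sub>R pprt (- x) - (- c) *\<^sub>R pprt x"
        using split by (simp add: algebra_simps)
      hence "cone_extension F (c *\<^sub>R x) = F ((- c) *\<^sub>R pprt (- x)) - F ((- c) *\<^sub>R pprt x)"
        by (rule ext[rotated 2]) (use False in \<open>simp_all add: scaleR_nonpos_nonneg\<close>)
      also have "\<dots> = c * F (pprt x) - c * F (pprt (- x))"
        using scale[of "- c" "pprt (- x)"] scale[of "- c" "pprt x"] False by simp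
      finally show ?thesis unfolding cone_extension_def by (simp add: algebra_simps)
    qed
  qed
qed

section \<open>The Riesz-Kantorovich formula for the modulus\<close>

lemma is_modulus_unique:
  assumes "is_modulus l m" "is_modulus l m'"
  shows "m = m'"
proof (rule linear_eq_if_eq_on_nonneg)
  show "linear m" "linear m'"
    using assms unfolding is_modulus_def order_bounded_functional_def by blast+
  have "functional_le m m'" "functional_le m' m"
    using assms unfolding is_modulus_def by blast+
  thus "m x = m' x" if "0 \<le> x" for x
    using that unfolding functional_le_def by (meson order_antisym)
qed

definition sup_on_interval :: "('a::vector_lattice \<Rightarrow> real) \<Rightarrow> 'a \<Rightarrow> real" where
  "sup_on_interval l x = Sup (l ` {u. 0 \<le> u \<and> u \<le> x})"

context
  fixes l :: "'a::vector_lattice \<Rightarrow> real"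
  assumes order_bounded: "order_bounded_functional l"
begin

lemma order_bounded_linear: "linear l"
  using order_bounded unfolding order_bounded_functional_def by blast

lemma sup_on_interval_upper: "0 \<le> u \<Longrightarrow> u \<le> x \<Longrightarrow> l u \<le> sup_on_interval l x"
proof -
  obtain M where "\<And>z. 0 \<le> z \<and> z \<le> x \<Longrightarrow> \<bar>l z\<bar> \<le> M"
    using order_bounded unfolding order_bounded_functional_def by blast
  hence "bdd_above (l ` {u. 0 \<le> u \<and> u \<le> x})"
    by (intro bdd_aboveI2[where M = M]) (auto dest: abs_le_D1)
  thus "0 \<le> u \<Longrightarrow> u \<le> x \<Longrightarrow> ?thesis"
    unfolding sup_on_interval_def by (auto intro: cSUP_upper)
qed

lemma sup_on_interval_least:
  "0 \<le> x \<Longrightarrow> (\<And>u. 0 \<le> u \<Longrightarrow> u \<le> x \<Longrightarrow> l u \<le> B) \<Longrightarrow> sup_on_interval l x \<le> B"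
  unfolding sup_on_interval_def by (rule cSUP_least) auto

lemma sup_on_interval_ge:
  assumes "0 \<le> x"
  shows "l x \<le> sup_on_interval l x" "0 \<le> sup_on_interval l x"
  using sup_on_interval_upper[OF assms order_refl] sup_on_interval_upper[OF order_refl assms]
    linear_0[OF order_bounded_linear] by simp_all

lemma sup_on_interval_add:
  assumes "0 \<le> x" "0 \<le> y"
  shows "sup_on_interval l (x + y) = sup_on_interval l x + sup_on_interval l y"
proof (rule antisym)
  show "sup_on_interval l (x + y) \<le> sup_on_interval l x + sup_on_interval l y"
  proof (rule sup_on_interval_least)
    fix w assume "0 \<le> w" "w \<le> x + y"
    then obtain u v where "0 \<le> u" "u \<le> x" "0 \<le> v" "v \<le> y" "w = u + v"
      using riesz_decomposition assms by blast
    thus "l w \<le> sup_on_interval l x + sup_on_interval l y"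
      using sup_on_interval_upper order_bounded_linear by (simp add: linear_add add_mono)
  qed (use assms in simp)
  have "l v \<le> sup_on_interval l (x + y) - l u" if "0 \<le> u" "u \<le> x" "0 \<le> v" "v \<le> y" for u v
    using sup_on_interval_upper[of "u + v" "x + y"] that order_bounded_linear
    by (simp add: linear_add add_mono)
  hence "sup_on_interval l y \<le> sup_on_interval l (x + y) - l u" if "0 \<le> u" "u \<le> x" for u
    using that assms(2) by (intro sup_on_interval_least) auto
  hence "sup_on_interval l x \<le> sup_on_interval l (x + y) - sup_on_interval l y"
    using assms(1) by (intro sup_on_interval_least) (auto simp: algebra_simps)
  thus "sup_on_interval l x + sup_on_interval l y \<le> sup_on_interval l (x + y)" by simp
qed

lemma sup_on_interval_scaleR:
  assumes "0 \<le> c" "0 \<le> x"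
  shows "sup_on_interval l (c *\<^sub>R x) = c * sup_on_interval l x"
proof (cases "c = 0")
  case True
  have "{u. 0 \<le> u \<and> u \<le> (0::'a)} = {0}" by auto
  thus ?thesis using True linear_0[OF order_bounded_linear] unfolding sup_on_interval_def by simp
next
  case False
  with assms have c: "0 < c" by simp
  note scale = linear_scale[OF order_bounded_linear]
  show ?thesis
  proof (rule antisym)
    show "sup_on_interval l (c *\<^sub>R x) \<le> c * sup_on_interval l x"
    proof (rule sup_on_interval_least)
      fix w assume "0 \<le> w" "w \<le> c *\<^sub>R x"
      hence "0 \<le> (1 / c) *\<^sub>R w" "(1 / c) *\<^sub>R w \<le> x"
        using c scaleR_left_mono[of w "c *\<^sub>R x" "1 / c"] by (simp_all add: scaleR_nonneg_nonneg)
      hence "l ((1 / c) *\<^sub>R w) \<le> sup_on_interval l x" by (rule sup_on_interval_upper)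
      thus "l w \<le> c * sup_on_interval l x" using c by (simp add: scale field_simps)
    qed (use assms in \<open>simp add: scaleR_nonneg_nonneg\<close>)
    have "l u \<le> sup_on_interval l (c *\<^sub>R x) / c" if "0 \<le> u" "u \<le> x" for u
      using sup_on_interval_upper[of "c *\<^sub>R u" "c *\<^sub>R x"] that c
      by (simp add: scaleR_nonneg_nonneg scaleR_left_mono scale field_simps)
    hence "sup_on_interval l x \<le> sup_on_interval l (c *\<^sub>R x) / c"
      using assms(2) by (rule sup_on_interval_least[rotated])
    thus "c * sup_on_interval l x \<le> sup_on_interval l (c *\<^sub>R x)" using c by (simp add: field_simps)
  qed
qed

lemma linear_cone_extension_sup_on_interval: "linear (cone_extension (sup_on_interval l))"
  by (rule linear_cone_extension) (simp_all add: sup_on_interval_add sup_on_interval_scaleR)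

lemma cone_extension_sup_on_interval:
  "0 \<le> x \<Longrightarrow> cone_extension (sup_on_interval l) x = sup_on_interval l x"
  by (rule cone_extension_nonneg) (simp_all add: sup_on_interval_add sup_on_interval_scaleR)

lemma is_modulus_riesz_kantorovich:
  "is_modulus l (\<lambda>x. 2 * cone_extension (sup_on_interval l) x - l x)" (is "is_modulus l ?m")
proof -
  have linear_m: "linear ?m"
    using linear_cone_extension_sup_on_interval order_bounded_linear
    by (intro linearI) (simp_all add: linear_functional_simps algebra_simps)
  have m_eq: "?m x = 2 * sup_on_interval l x - l x" if "0 \<le> x" for x
    using cone_extension_sup_on_interval[OF that] by simp
  have le_m: "l x \<le> ?m x" "- l x \<le> ?m x" if "0 \<le> x" for x
    using sup_on_interval_ge[OF that] m_eq[OF that] by simp_all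
  have least: "functional_le ?m g"
    if "order_bounded_functional g" "functional_le l g" "functional_le (\<lambda>x. - l x) g" for g
    unfolding functional_le_def
  proof (intro allI impI)
    fix x :: 'a assume x: "0 \<le> x"
    have "linear g" using that(1) unfolding order_bounded_functional_def by blast
    have "l u \<le> (g x + l x) / 2" if "0 \<le> u" "u \<le> x" for u
    proof -
      have "l u \<le> g u" "- l (x - u) \<le> g (x - u)"
        using \<open>functional_le l g\<close> \<open>functional_le (\<lambda>x. - l x) g\<close> that
        unfolding functional_le_def by simp_all
      thus ?thesis using \<open>linear g\<close> order_bounded_linear by (simp add: linear_diff)
    qed
    hence "sup_on_interval l x \<le> (g x + l x) / 2" by (rule sup_on_interval_least[OF x])
    thus "?m x \<le> g x" using m_eq[OF x] by simp
  qed
  have "positive_functional ?m"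
    unfolding positive_functional_def using le_m by fastforce
  thus ?thesis
    unfolding is_modulus_def functional_le_def
    using order_bounded_if_positive[OF linear_m] le_m least by (auto simp: functional_le_def)
qed

lemma is_modulus_modulus: "is_modulus l (modulus l)"
  unfolding modulus_def
  by (rule theI[where P = "is_modulus l", OF is_modulus_riesz_kantorovich])
    (simp add: is_modulus_unique is_modulus_riesz_kantorovich)

lemma modulus_nonneg_eq: "0 \<le> x \<Longrightarrow> modulus l x = 2 * sup_on_interval l x - l x"
  using is_modulus_unique[OF is_modulus_modulus is_modulus_riesz_kantorovich]
    cone_extension_sup_on_interval by simp

lemma linear_modulus: "linear (modulus l)"
  using is_modulus_modulus unfolding is_modulus_def order_bounded_functional_def by blast

lemma abs_le_modulus: "0 \<le> x \<Longrightarrow> \<bar>l x\<bar> \<le> modulus l x"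
  using is_modulus_modulus unfolding is_modulus_def functional_le_def by force

lemma positive_modulus: "positive_functional (modulus l)"
  unfolding positive_functional_def using abs_le_modulus by force

lemma abs_le_modulus_pprt: "\<bar>l x\<bar> \<le> modulus l (pprt x + pprt (- x))"
proof -
  have "l x = l (pprt x) - l (pprt (- x))"
    using order_bounded_linear by (metis linear_diff pprt_diff_pprt_neg)
  thus ?thesis
    using abs_le_modulus[of "pprt x"] abs_le_modulus[of "pprt (- x)"] linear_modulus
    by (simp add: linear_add)
qed

lemma modulus_eq_0_if_vanishes_below:
  assumes "0 \<le> x" "\<And>u. 0 \<le> u \<Longrightarrow> u \<le> x \<Longrightarrow> l u = 0"
  shows "modulus l x = 0"
proof -
  have "sup_on_interval l x \<le> 0" using assms by (intro sup_on_interval_least) auto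
  thus ?thesis using sup_on_interval_ge(2)[OF assms(1)] modulus_nonneg_eq[OF assms(1)] assms by simp
qed

end

section \<open>Kernels that are Grothendieck subspaces\<close>

lemma grothendieck_kernel_iff:
  assumes "linear l"
  shows "grothendieck_subspace {x. l x = 0} \<longleftrightarrow>
    (\<forall>x y. l x = 0 \<longrightarrow> l y = 0 \<longrightarrow> l (sup (sup x y) 0 + inf (inf x y) 0) = 0)"
  using assms unfolding grothendieck_subspace_def subspace_def
  by (auto simp: linear_functional_simps)

lemma grothendieck_combination_disjoint:
  fixes x y z :: "'a::vector_lattice"
  assumes xy: "inf x y = 0" and xz: "inf x z = 0" and yz: "inf y z = 0"
  shows "sup (sup (x + c *\<^sub>R z) (y + c *\<^sub>R z)) 0 + inf (inf (x + c *\<^sub>R z) (y + c *\<^sub>R z)) 0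
    = x + y + c *\<^sub>R z"
proof -
  have "sup (x + c *\<^sub>R z) (y + c *\<^sub>R z) = x + y + c *\<^sub>R z"
    using add_sup_distrib_right[of x y "c *\<^sub>R z"] sup_eq_add_if_inf_eq_0[OF xy] by simp
  moreover have "inf (x + c *\<^sub>R z) (y + c *\<^sub>R z) = c *\<^sub>R z"
    using add_inf_distrib_right[of x y "c *\<^sub>R z"] xy by simp
  moreover have "0 \<le> x" "0 \<le> y" "0 \<le> z"
    using inf_eq_0_imp_nonneg xy yz by blast+
  moreover have "sup (x + y + c *\<^sub>R z) 0 = x + y" if "c < 0"
  proof -
    have "inf (x + y) ((- c) *\<^sub>R z) = 0"
      using inf_scaleR_eq_0[OF xz, of 1 "- c"] inf_scaleR_eq_0[OF yz, of 1 "- c"] that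
      by (intro inf_add_eq_0) simp_all
    thus ?thesis using pprt_diff_eq_if_inf_eq_0 unfolding pprt_def by fastforce
  qed
  ultimately show ?thesis
    by (cases "0 \<le> c") (auto simp: scaleR_nonneg_nonneg scaleR_nonpos_nonneg add_nonneg_nonneg
        sup_absorb1 inf_absorb1 inf_absorb2)
qed

lemma grothendieck_kernel_same_sign_disjoint:
  fixes l :: "'a::vector_lattice \<Rightarrow> real"
  assumes l: "linear l" and G: "grothendieck_subspace {x. l x = 0}"
    and xy: "inf x y = 0" and xz: "inf x z = 0" and yz: "inf y z = 0"
    and same_sign: "0 < l x * l y"
  shows "l z = 0"
proof (rule ccontr)
  assume "l z \<noteq> 0"
  define s where "s = \<bar>l y\<bar> * l x"
  have s: "\<bar>l x\<bar> * l y = s" "s \<noteq> 0"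
    using same_sign unfolding s_def by (auto simp: zero_less_mult_iff)
  define c where "c = - s / l z"
  let ?x = "\<bar>l y\<bar> *\<^sub>R x" and ?y = "\<bar>l x\<bar> *\<^sub>R y"
  have "l (?x + c *\<^sub>R z) = 0" "l (?y + c *\<^sub>R z) = 0"
    using l s(1) \<open>l z \<noteq> 0\<close> by (simp_all add: linear_functional_simps c_def s_def[symmetric])
  hence "l (sup (sup (?x + c *\<^sub>R z) (?y + c *\<^sub>R z)) 0 + inf (inf (?x + c *\<^sub>R z) (?y + c *\<^sub>R z)) 0) = 0"
    using G grothendieck_kernel_iff[OF l] by blast
  moreover have "inf ?x ?y = 0" "inf ?x z = 0" "inf ?y z = 0"
    using inf_scaleR_eq_0[OF xy] inf_scaleR_eq_0[OF xz, of _ 1] inf_scaleR_eq_0[OF yz, of _ 1]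
    by simp_all
  ultimately have "l (?x + ?y + c *\<^sub>R z) = 0" by (simp only: grothendieck_combination_disjoint)
  moreover have "l (?x + ?y + c *\<^sub>R z) = s"
    using l s(1) \<open>l z \<noteq> 0\<close> by (simp add: linear_functional_simps c_def s_def[symmetric])
  ultimately show False using s by simp
qed

lemma grothendieck_kernel_three_disjoint:
  fixes l :: "'a::vector_lattice \<Rightarrow> real"
  assumes "linear l" "grothendieck_subspace {x. l x = 0}"
    and "inf x y = 0" "inf x z = 0" "inf y z = 0"
  shows "l x = 0 \<or> l y = 0 \<or> l z = 0"
proof -
  note same_sign = grothendieck_kernel_same_sign_disjoint[OF assms(1,2)]
  have "inf y x = 0" "inf z x = 0" "inf z y = 0" using assms(3-5) by (simp_all add: inf_commute)
  hence "\<not> 0 < l x * l y \<or> l z = 0" "\<not> 0 < l x * l z \<or> l y = 0" "\<not> 0 < l y * l z \<or> l x = 0"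
    using same_sign[of x y z] same_sign[of x z y] same_sign[of y z x] assms(3-5) by blast+
  thus ?thesis by (auto simp: zero_less_mult_iff not_less)
qed

definition three_disjoint_vanish :: "('a::vector_lattice \<Rightarrow> real) \<Rightarrow> bool" where
  "three_disjoint_vanish \<phi> \<longleftrightarrow>
    (\<forall>x y z. inf x y = 0 \<longrightarrow> inf x z = 0 \<longrightarrow> inf y z = 0 \<longrightarrow> \<phi> x = 0 \<or> \<phi> y = 0 \<or> \<phi> z = 0)"

lemma three_disjoint_vanish_modulus:
  fixes l :: "'a::vector_lattice \<Rightarrow> real"
  assumes ob: "order_bounded_functional l" and G: "grothendieck_subspace {x. l x = 0}"
  shows "three_disjoint_vanish (modulus l)"
  unfolding three_disjoint_vanish_def
proof (intro allI impI)
  fix x y z :: 'a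
  assume xy: "inf x y = 0" and xz: "inf x z = 0" and yz: "inf y z = 0"
  have witness: "\<exists>u. 0 \<le> u \<and> u \<le> v \<and> l u \<noteq> 0" if "0 \<le> v" "modulus l v \<noteq> 0" for v
    using modulus_eq_0_if_vanishes_below[OF ob that(1)] that(2) by blast
  show "modulus l x = 0 \<or> modulus l y = 0 \<or> modulus l z = 0"
  proof (rule ccontr)
    assume "\<not> ?thesis"
    hence nz: "modulus l x \<noteq> 0" "modulus l y \<noteq> 0" "modulus l z \<noteq> 0" by simp_all
    obtain u where u: "0 \<le> u" "u \<le> x" "l u \<noteq> 0"
      using witness[OF _ nz(1)] inf_eq_0_imp_nonneg(1)[OF xy] by blast
    obtain v where v: "0 \<le> v" "v \<le> y" "l v \<noteq> 0"
      using witness[OF _ nz(2)] inf_eq_0_imp_nonneg(2)[OF xy] by blast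
    obtain w where w: "0 \<le> w" "w \<le> z" "l w \<noteq> 0"
      using witness[OF _ nz(3)] inf_eq_0_imp_nonneg(2)[OF yz] by blast
    have "inf u v = 0" "inf u w = 0" "inf v w = 0"
      using inf_eq_0_mono[OF xy u(1,2) v(1,2)] inf_eq_0_mono[OF xz u(1,2) w(1,2)]
        inf_eq_0_mono[OF yz v(1,2) w(1,2)] .
    thus False
      using grothendieck_kernel_three_disjoint[OF order_bounded_linear[OF ob] G] u(3) v(3) w(3)
      by blast
  qed
qed

section \<open>Splitting a positive functional along a band\<close>

locale band_splitting =
  fixes \<phi> :: "'a::vector_lattice \<Rightarrow> real" and a b :: 'a
  assumes phi_linear: "linear \<phi>" and phi_positive: "positive_functional \<phi>"
    and phi_three_disjoint: "three_disjoint_vanish \<phi>"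
    and a_disjoint_b: "inf a b = 0" and phi_a: "\<phi> a = 1" and phi_b: "0 < \<phi> b"
begin

lemma phi_nonneg: "0 \<le> x \<Longrightarrow> 0 \<le> \<phi> x"
  using phi_positive unfolding positive_functional_def by blast

lemma phi_mono: "x \<le> y \<Longrightarrow> \<phi> x \<le> \<phi> y"
  by (rule positive_functional_mono[OF phi_linear phi_positive])

lemma phi_simps: "\<phi> (x + y) = \<phi> x + \<phi> y" "\<phi> (x - y) = \<phi> x - \<phi> y" "\<phi> (c *\<^sub>R x) = c * \<phi> x"
  using phi_linear by (simp_all add: linear_functional_simps)

lemma one_of_three_disjoint_vanishes:
  "inf x y = 0 \<Longrightarrow> inf x z = 0 \<Longrightarrow> inf y z = 0 \<Longrightarrow> \<phi> x = 0 \<or> \<phi> y = 0 \<or> \<phi> z = 0"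
  using phi_three_disjoint unfolding three_disjoint_vanish_def by blast

lemma scaleR_a_nonneg: "0 \<le> t \<Longrightarrow> 0 \<le> t *\<^sub>R a"
  using inf_eq_0_imp_nonneg(1)[OF a_disjoint_b] by (simp add: scaleR_nonneg_nonneg)

lemma scaleR_a_disjoint_b: "0 \<le> t \<Longrightarrow> inf (t *\<^sub>R a) b = 0"
  using inf_scaleR_eq_0[OF a_disjoint_b, of t 1] by simp

lemma truncation_stable:
  assumes x: "0 \<le> x" and s: "\<phi> x < s" and st: "s \<le> t"
  shows "\<phi> (inf x (t *\<^sub>R a)) = \<phi> (inf x (s *\<^sub>R a))"
proof -
  have "0 \<le> s" using phi_nonneg[OF x] s by simp
  define d where "d = inf x (t *\<^sub>R a) - inf x (s *\<^sub>R a)"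
  define r where "r = pprt (s *\<^sub>R a - x)"
  have "s *\<^sub>R a \<le> t *\<^sub>R a"
    using st inf_eq_0_imp_nonneg(1)[OF a_disjoint_b] by (rule scaleR_right_mono)
  hence "inf x (s *\<^sub>R a) \<le> inf x (t *\<^sub>R a)" by (simp add: le_infI2)
  hence "0 \<le> d" unfolding d_def by (simp only: diff_ge_0_iff_ge)
  have "0 \<le> inf x (s *\<^sub>R a)" using x scaleR_a_nonneg[OF \<open>0 \<le> s\<close>] by simp
  hence "d \<le> inf x (t *\<^sub>R a)" unfolding d_def by (simp only: diff_le_eq le_add_same_cancel1)
  hence "d \<le> t *\<^sub>R a" by (rule order_trans[OF _ inf_le2])
  have "d \<le> pprt (x - s *\<^sub>R a)"
    unfolding d_def diff_inf_eq_pprt_diff[symmetric] by (rule diff_right_mono) simp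
  have "0 \<le> r" unfolding r_def by simp
  have "r \<le> s *\<^sub>R a" unfolding r_def pprt_def using x scaleR_a_nonneg[OF \<open>0 \<le> s\<close>] by simp
  have "inf d b = 0"
    using inf_eq_0_mono[OF scaleR_a_disjoint_b \<open>0 \<le> d\<close> \<open>d \<le> t *\<^sub>R a\<close>] \<open>0 \<le> s\<close> st
    inf_eq_0_imp_nonneg(2)[OF a_disjoint_b] by simp
  moreover have "inf d r = 0"
  proof -
    have "inf (pprt (x - s *\<^sub>R a)) r = 0"
      unfolding r_def by (rule inf_pprt_pprt_eq_0_if_add_le_0) simp
    thus ?thesis
      using inf_eq_0_mono[OF _ \<open>0 \<le> d\<close> \<open>d \<le> pprt (x - s *\<^sub>R a)\<close> \<open>0 \<le> r\<close> order_refl] by blast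
  qed
  moreover have "inf b r = 0"
    using inf_eq_0_mono[OF scaleR_a_disjoint_b[OF \<open>0 \<le> s\<close>] \<open>0 \<le> r\<close> \<open>r \<le> s *\<^sub>R a\<close>]
      inf_eq_0_imp_nonneg(2)[OF a_disjoint_b] by (simp add: inf_commute)
  moreover have "0 < \<phi> r"
    using phi_mono[of "s *\<^sub>R a - x" r] s unfolding r_def pprt_def by (simp add: phi_simps phi_a)
  ultimately have "\<phi> d = 0" using one_of_three_disjoint_vanishes[of d b r] phi_b by auto
  thus ?thesis unfolding d_def phi_simps by simp
qed

(*
  By truncation_stable, phi (inf x (t *R a)) does not depend on t once t > phi x. For x >= 0,
  band_cone x is this eventual value: the phi-mass of the component of x in the band
  generated by a.
*)
definition band_cone :: "'a \<Rightarrow> real" where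
  "band_cone x = \<phi> (inf x ((\<phi> x + 1) *\<^sub>R a))"

lemma band_cone_eq:
  assumes x: "0 \<le> x" and t: "\<phi> x < t"
  shows "band_cone x = \<phi> (inf x (t *\<^sub>R a))"
proof -
  have "\<phi> (inf x (max t (\<phi> x + 1) *\<^sub>R a)) = \<phi> (inf x (t *\<^sub>R a))"
    by (rule truncation_stable[OF x t]) simp
  moreover have "\<phi> (inf x (max t (\<phi> x + 1) *\<^sub>R a)) = band_cone x"
    unfolding band_cone_def by (rule truncation_stable[OF x]) simp_all
  ultimately show ?thesis by simp
qed

lemma band_cone_le:
  assumes "0 \<le> x"
  shows "0 \<le> band_cone x" "band_cone x \<le> \<phi> x"
  unfolding band_cone_def
  using assms phi_nonneg[OF assms] scaleR_a_nonneg[of "\<phi> x + 1"]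
  by (simp_all add: phi_nonneg phi_mono)

lemma band_cone_add:
  assumes x: "0 \<le> x" and y: "0 \<le> y"
  shows "band_cone (x + y) = band_cone x + band_cone y"
proof -
  define t where "t = \<phi> x + \<phi> y + 1"
  have "0 \<le> \<phi> x" "0 \<le> \<phi> y" using phi_nonneg x y by blast+
  hence t: "0 \<le> t" "\<phi> x < t" "\<phi> y < t" "\<phi> (x + y) < t" "\<phi> (x + y) < 2 * t"
    unfolding t_def by (simp_all add: phi_simps)
  have e: "band_cone x = \<phi> (inf x (t *\<^sub>R a))" "band_cone y = \<phi> (inf y (t *\<^sub>R a))"
    "band_cone (x + y) = \<phi> (inf (x + y) (t *\<^sub>R a))"
    "band_cone (x + y) = \<phi> (inf (x + y) ((2 * t) *\<^sub>R a))"
    using band_cone_eq[OF x t(2)] band_cone_eq[OF y t(3)] band_cone_eq[OF _ t(4)]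
      band_cone_eq[OF _ t(5)] x y by simp_all
  have "\<phi> (inf (x + y) (t *\<^sub>R a)) \<le> \<phi> (inf x (t *\<^sub>R a) + inf y (t *\<^sub>R a))"
    using phi_mono inf_add_le[OF x y scaleR_a_nonneg[OF t(1)]] .
  moreover have "(2 * t) *\<^sub>R a = t *\<^sub>R a + t *\<^sub>R a" by (simp add: scaleR_2 flip: scaleR_scaleR)
  hence "inf x (t *\<^sub>R a) + inf y (t *\<^sub>R a) \<le> inf (x + y) ((2 * t) *\<^sub>R a)"
    by (simp only:) (intro le_infI add_mono inf_le1 inf_le2)
  hence "\<phi> (inf x (t *\<^sub>R a) + inf y (t *\<^sub>R a)) \<le> \<phi> (inf (x + y) ((2 * t) *\<^sub>R a))"
    by (rule phi_mono)
  ultimately show ?thesis using e unfolding phi_simps by linarith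
qed

lemma band_cone_scaleR:
  assumes c: "0 \<le> c" and x: "0 \<le> x"
  shows "band_cone (c *\<^sub>R x) = c * band_cone x"
proof (cases "c = 0")
  case True
  thus ?thesis using band_cone_add[of 0 0] by simp
next
  case False
  with c have "0 < c" by simp
  have "band_cone (c *\<^sub>R x) = \<phi> (inf (c *\<^sub>R x) (c *\<^sub>R ((\<phi> x + 1) *\<^sub>R a)))"
    using band_cone_eq[of "c *\<^sub>R x" "c * (\<phi> x + 1)"] c x \<open>0 < c\<close>
    by (simp add: scaleR_nonneg_nonneg phi_simps)
  also have "\<dots> = c * band_cone x"
    unfolding band_cone_def scaleR_inf_distrib[OF c, symmetric] phi_simps ..
  finally show ?thesis .
qed

definition band_part :: "'a \<Rightarrow> real" where
  "band_part = cone_extension band_cone"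

definition rest_part :: "'a \<Rightarrow> real" where
  "rest_part x = \<phi> x - band_part x"

lemma linear_band_part: "linear band_part"
  unfolding band_part_def
  by (rule linear_cone_extension) (simp_all add: band_cone_add band_cone_scaleR)

lemma band_part_eq_band_cone: "0 \<le> x \<Longrightarrow> band_part x = band_cone x"
  unfolding band_part_def
  by (rule cone_extension_nonneg) (simp_all add: band_cone_add band_cone_scaleR)

lemma band_part_eq: "0 \<le> x \<Longrightarrow> \<phi> x < t \<Longrightarrow> band_part x = \<phi> (inf x (t *\<^sub>R a))"
  using band_part_eq_band_cone band_cone_eq by simp

lemma rest_part_eq:
  assumes "0 \<le> x" "\<phi> x < t"
  shows "rest_part x = \<phi> (pprt (x - t *\<^sub>R a))"
  unfolding rest_part_def band_part_eq[OF assms] diff_inf_eq_pprt_diff[symmetric] phi_simps ..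

lemma riesz_hom_band_part: "riesz_hom band_part"
proof (rule riesz_homI[OF linear_band_part])
  show "positive_functional band_part"
    unfolding positive_functional_def using band_part_eq_band_cone band_cone_le by simp
  fix x y :: 'a assume xy: "inf x y = 0"
  define t where "t = \<phi> x + \<phi> y + 1"
  have x: "0 \<le> x" and y: "0 \<le> y" using inf_eq_0_imp_nonneg[OF xy] .
  hence t: "0 \<le> t" "\<phi> x < t" "\<phi> y < t" unfolding t_def using phi_nonneg by fastforce+
  have u: "0 \<le> inf x (t *\<^sub>R a)" "0 \<le> inf y (t *\<^sub>R a)" using x y scaleR_a_nonneg[OF t(1)] by simp_all
  have "inf (inf x (t *\<^sub>R a)) (inf y (t *\<^sub>R a)) = 0"
    using inf_eq_0_mono[OF xy u(1) inf_le1 u(2) inf_le1] .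
  moreover have "inf (inf x (t *\<^sub>R a)) b = 0" "inf (inf y (t *\<^sub>R a)) b = 0"
    using inf_eq_0_mono[OF scaleR_a_disjoint_b[OF t(1)] u(1) inf_le2 _ order_refl]
      inf_eq_0_mono[OF scaleR_a_disjoint_b[OF t(1)] u(2) inf_le2 _ order_refl]
      inf_eq_0_imp_nonneg(2)[OF a_disjoint_b] by simp_all
  ultimately have "\<phi> (inf x (t *\<^sub>R a)) = 0 \<or> \<phi> (inf y (t *\<^sub>R a)) = 0"
    using one_of_three_disjoint_vanishes phi_b by fastforce
  thus "band_part x = 0 \<or> band_part y = 0"
    using band_part_eq[OF x t(2)] band_part_eq[OF y t(3)] by simp
qed

lemma riesz_hom_rest_part: "riesz_hom rest_part"
proof (rule riesz_homI)
  show "linear rest_part"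
    unfolding rest_part_def using phi_linear linear_band_part
    by (intro linearI) (simp_all add: linear_functional_simps algebra_simps)
  show "positive_functional rest_part"
    unfolding positive_functional_def rest_part_def using band_part_eq_band_cone band_cone_le by simp
  fix x y :: 'a assume xy: "inf x y = 0"
  define t where "t = \<phi> x + \<phi> y + 1"
  have x: "0 \<le> x" and y: "0 \<le> y" using inf_eq_0_imp_nonneg[OF xy] .
  hence t: "0 \<le> t" "\<phi> x < t" "\<phi> y < t" unfolding t_def using phi_nonneg by fastforce+
  define p where "p = pprt (x - t *\<^sub>R a)"
  define q where "q = pprt (y - t *\<^sub>R a)"
  define r where "r = pprt (t *\<^sub>R a - x - y)"
  have "p \<le> x" "q \<le> y"
    unfolding p_def q_def pprt_def using x y scaleR_a_nonneg[OF t(1)] by simp_all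
  hence "inf p q = 0" using inf_eq_0_mono[OF xy] unfolding p_def q_def by simp
  moreover have "inf p r = 0" "inf q r = 0"
    unfolding p_def q_def r_def using x y by (simp_all add: inf_pprt_pprt_eq_0_if_add_le_0)
  moreover have "0 < \<phi> r"
    using phi_mono[of "t *\<^sub>R a - x - y" r] unfolding r_def pprt_def t_def
    by (simp add: phi_simps phi_a)
  ultimately have "\<phi> p = 0 \<or> \<phi> q = 0"
    using one_of_three_disjoint_vanishes[of p q r] by auto
  thus "rest_part x = 0 \<or> rest_part y = 0"
    using rest_part_eq[OF x t(2)] rest_part_eq[OF y t(3)] unfolding p_def q_def by simp
qed

end

theorem sum_of_riesz_homs_if_three_disjoint_vanish:
  fixes \<phi> :: "'a::vector_lattice \<Rightarrow> real"
  assumes lin: "linear \<phi>" and pos: "positive_functional \<phi>" and three: "three_disjoint_vanish \<phi>"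
  shows "\<exists>f g. riesz_hom f \<and> riesz_hom g \<and> \<phi> = (\<lambda>x. f x + g x)"
proof (cases "\<exists>a b. inf a b = 0 \<and> \<phi> a \<noteq> 0 \<and> \<phi> b \<noteq> 0")
  case False
  hence "riesz_hom \<phi>" by (intro riesz_homI[OF lin pos]) blast
  thus ?thesis using riesz_hom_zero by fastforce
next
  case True
  then obtain a b where ab: "inf a b = 0" "\<phi> a \<noteq> 0" "\<phi> b \<noteq> 0" by blast
  hence "0 < \<phi> a" "0 < \<phi> b"
    using pos inf_eq_0_imp_nonneg[OF ab(1)] unfolding positive_functional_def
    by (simp_all add: order_less_le)
  hence "band_splitting \<phi> ((1 / \<phi> a) *\<^sub>R a) b"
    using lin pos three inf_scaleR_eq_0[OF ab(1), of "1 / \<phi> a" 1]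
    by unfold_locales (simp_all add: linear_functional_simps)
  thus ?thesis
    using band_splitting.riesz_hom_band_part band_splitting.riesz_hom_rest_part
      band_splitting.rest_part_def by fastforce
qed

section \<open>Kernels of combinations of Riesz homomorphisms\<close>

lemma linear_functional_eq_scale_if_kernel_subset:
  fixes g l :: "'a::real_vector \<Rightarrow> real"
  assumes g: "linear g" and l: "linear l" and ker: "\<And>z. g z = 0 \<Longrightarrow> l z = 0"
  shows "\<exists>c. \<forall>z. l z = c * g z"
proof (cases "\<exists>w. g w \<noteq> 0")
  case True
  then obtain w where w: "g w \<noteq> 0" by blast
  have "l z = l w / g w * g z" for z
  proof -
    have "g (z - (g z / g w) *\<^sub>R w) = 0" using g w by (simp add: linear_functional_simps)
    hence "l (z - (g z / g w) *\<^sub>R w) = 0" by (rule ker)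
    thus ?thesis using l by (simp add: linear_functional_simps)
  qed
  thus ?thesis by blast
qed (use ker in auto)

lemma linear_functional_combination_if_kernels:
  fixes f g l :: "'a::real_vector \<Rightarrow> real"
  assumes f: "linear f" and g: "linear g" and l: "linear l"
    and ker: "\<And>z. f z = 0 \<Longrightarrow> g z = 0 \<Longrightarrow> l z = 0"
  shows "\<exists>\<alpha> \<beta>. \<forall>z. l z = \<alpha> * f z + \<beta> * g z"
proof (cases "\<exists>v. g v = 0 \<and> f v \<noteq> 0")
  case True
  then obtain v where v: "g v = 0" "f v \<noteq> 0" by blast
  define \<alpha> where "\<alpha> = l v / f v"
  have "l z - \<alpha> * f z = 0" if "g z = 0" for z
  proof -
    have "f (z - (f z / f v) *\<^sub>R v) = 0" "g (z - (f z / f v) *\<^sub>R v) = 0"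
      using f g v that by (simp_all add: linear_functional_simps)
    hence "l (z - (f z / f v) *\<^sub>R v) = 0" by (rule ker)
    thus ?thesis using l unfolding \<alpha>_def by (simp add: linear_functional_simps)
  qed
  moreover have "linear (\<lambda>z. l z - \<alpha> * f z)"
    using f l by (intro linearI) (simp_all add: linear_functional_simps algebra_simps)
  ultimately obtain \<beta> where "\<forall>z. l z - \<alpha> * f z = \<beta> * g z"
    using linear_functional_eq_scale_if_kernel_subset[OF g] by blast
  hence "\<forall>z. l z = \<alpha> * f z + \<beta> * g z" by (simp add: algebra_simps)
  thus ?thesis by blast
next
  case False
  hence "\<exists>\<beta>. \<forall>z. l z = \<beta> * g z"
    using ker by (intro linear_functional_eq_scale_if_kernel_subset[OF g l]) blast
  thus ?thesis by (metis mult_zero_left add_0)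
qed

lemma max_min_zero_mult:
  fixes a b c :: real
  shows "max (max (c * a) (c * b)) 0 + min (min (c * a) (c * b)) 0
    = c * (max (max a b) 0 + min (min a b) 0)"
  by (simp add: distrib_left max_mult_distrib_left min_mult_distrib_left)

lemma grothendieck_kernel_if_combination_of_riesz_homs:
  assumes f: "riesz_hom f" and g: "riesz_hom g" and l: "\<And>x. l x = \<alpha> * f x + \<beta> * g x"
  shows "grothendieck_subspace {x. l x = 0}"
proof -
  let ?T = "\<lambda>u v :: real. max (max u v) 0 + min (min u v) 0"
  have "linear l"
    unfolding l[abs_def] using riesz_hom_linear[OF f] riesz_hom_linear[OF g]
    by (intro linearI) (simp_all add: linear_functional_simps algebra_simps)
  moreover have "l (sup (sup x y) 0 + inf (inf x y) 0) = 0" if "l x = 0" "l y = 0" for x y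
  proof -
    have "\<beta> * g x = - (\<alpha> * f x)" "\<beta> * g y = - (\<alpha> * f y)"
      using that l by (simp_all add: algebra_simps)
    have "l (sup (sup x y) 0 + inf (inf x y) 0) = \<alpha> * ?T (f x) (f y) + \<beta> * ?T (g x) (g y)"
      unfolding l riesz_hom_grothendieck_combination[OF f] riesz_hom_grothendieck_combination[OF g]
      ..
    also have "\<dots> = ?T (\<alpha> * f x) (\<alpha> * f y) + ?T (- (\<alpha> * f x)) (- (\<alpha> * f y))"
      unfolding max_min_zero_mult[symmetric] \<open>\<beta> * g x = _\<close> \<open>\<beta> * g y = _\<close> ..
    also have "\<dots> = 0"
      using max_min_zero_mult[of "-1" "\<alpha> * f x" "\<alpha> * f y"] by simp
    finally show ?thesis .
  qed
  ultimately show ?thesis using grothendieck_kernel_iff by blast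
qed

lemma grothendieck_kernel_if_modulus_sum:
  assumes ob: "order_bounded_functional l" and f: "riesz_hom f" and g: "riesz_hom g"
    and m: "modulus l = (\<lambda>x. f x + g x)"
  shows "grothendieck_subspace {x. l x = 0}"
proof -
  have "l z = 0" if "f z = 0" "g z = 0" for z
  proof -
    have "\<bar>l z\<bar> \<le> \<bar>f z\<bar> + \<bar>g z\<bar>"
      using abs_le_modulus_pprt[OF ob, of z] unfolding m riesz_hom_abs[OF f] riesz_hom_abs[OF g] .
    thus ?thesis using that by simp
  qed
  then obtain \<alpha> \<beta> where "\<And>z. l z = \<alpha> * f z + \<beta> * g z"
    using linear_functional_combination_if_kernels[OF riesz_hom_linear[OF f] riesz_hom_linear[OF g]
        order_bounded_linear[OF ob]] by blast
  thus ?thesis by (rule grothendieck_kernel_if_combination_of_riesz_homs[OF f g])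
qed

theorem lemma4:
  fixes l :: "'a::vector_lattice \<Rightarrow> real"
  assumes "order_bounded_functional l"
  shows "grothendieck_subspace {x. l x = 0} \<longleftrightarrow>
         (\<exists>f g. riesz_hom f \<and> riesz_hom g \<and> modulus l = (\<lambda>x. f x + g x))"
proof
  assume "grothendieck_subspace {x. l x = 0}"
  hence "three_disjoint_vanish (modulus l)" by (rule three_disjoint_vanish_modulus[OF assms])
  thus "\<exists>f g. riesz_hom f \<and> riesz_hom g \<and> modulus l = (\<lambda>x. f x + g x)"
    by (rule sum_of_riesz_homs_if_three_disjoint_vanish[OF linear_modulus[OF assms]
          positive_modulus[OF assms]])
next
  assume "\<exists>f g. riesz_hom f \<and> riesz_hom g \<and> modulus l = (\<lambda>x. f x + g x)"
  then obtain f g where "riesz_hom f" "riesz_hom g" "modulus l = (\<lambda>x. f x + g x)" by blast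
  thus "grothendieck_subspace {x. l x = 0}" by (rule grothendieck_kernel_if_modulus_sum[OF assms])
qed

end
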